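(* Let $(B,\nu_B)$ be as in the context and let $\varphi,\psi:B\to S^1$ be measurable maps such that (1) $\varphi_*\nu_B$ and $\psi_*\nu_B$ have no atoms; (2) the essential images of $\varphi$ and $\psi$ both equal $S^1$; (3) $o(\varphi(x),\varphi(y),\varphi(z))=o(\psi(x),\psi(y),\psi(z))$ for almost every $(x,y,z)\in B^3$. Then the essential image $F\subset S^1\times S^1$ of the map $x\mapsto(\varphi(x),\psi(x))$ is the graph of an orientation preserving homeomorphism $h:S^1\to S^1$, and $h(\varphi(x))=\psi(x)$ for almost every $x\in B$.
   Context: $(B,\nu_B)$ is a standard Lebesgue probability space (in the paper, a $G$-space for a locally compact second countable group $G$ with $\mu$-stationary, doubly ergodic, amenable action). The essential image of a measurable map into a compact metric space is the support of the pushforward of $\nu_B$. The orientation cocycle $o:(S^1)^3\to\{-1,0,1\}$ is $1$ on positively oriented triples, $-1$ on negatively oriented triples, and $0$ if the points are not pairwise distinct. *)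

theory Defs
  imports "HOL-Probability.Probability"
begin

abbreviation S1 :: "complex set" where
  "S1 \<equiv> sphere 0 1"

definition ccw_angle :: "complex \<Rightarrow> complex \<Rightarrow> real" where
  "ccw_angle u v = (THE t. 0 \<le> t \<and> t < 2 * pi \<and> v = u * cis t)"

definition pos_oriented :: "complex \<Rightarrow> complex \<Rightarrow> complex \<Rightarrow> bool" where
  "pos_oriented x y z \<longleftrightarrow> x \<noteq> y \<and> y \<noteq> z \<and> x \<noteq> z \<and> ccw_angle x y < ccw_angle x z"

definition orient :: "complex \<Rightarrow> complex \<Rightarrow> complex \<Rightarrow> int" where
  "orient x y z =
     (if x = y \<or> y = z \<or> x = z then 0
      else if pos_oriented x y z then 1 else -1)"

definition measure_support :: "'a::topological_space measure \<Rightarrow> 'a set" where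
  "measure_support \<mu> = {p. \<forall>U. open U \<longrightarrow> p \<in> U \<longrightarrow> emeasure \<mu> U > 0}"

definition ess_image :: "'b measure \<Rightarrow> ('b \<Rightarrow> 'a::topological_space) \<Rightarrow> 'a set" where
  "ess_image M f = measure_support (distr M borel f)"

definition orient_pres_homeo :: "(complex \<Rightarrow> complex) \<Rightarrow> bool" where
  "orient_pres_homeo h \<longleftrightarrow>
     (\<exists>g. homeomorphism S1 S1 h g) \<and>
     (\<forall>x\<in>S1. \<forall>y\<in>S1. \<forall>z\<in>S1. orient (h x) (h y) (h z) = orient x y z)"

end

theory Submission
  imports Defs
begin

text \<open>Orientation of triples on the circle is the sign of a continuous function (the
  signed area), hence locally constant at triples of distinct points. Sampling small boxes of
  positive measure around three points of the essential image F of x \<mapsto> (\<phi> x, \<psi> x)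
  therefore shows that orientation agrees in both coordinates for all such triples of F.
  If (a, b) and (a, b') lay in F with b \<noteq> b', take u such that the diameter through u
  separates b from b'; as \<phi> is atomless and \<psi> has full essential image, F contains
  (x, c) and (y, d) with a, x, y distinct, c near u and d near -u, and then orient a x y would
  equal both orient b c d = 1 and orient b' c d = -1. So F is the graph of a map, by symmetry
  a bijection, continuous because F is closed in the compact S1 \<times> S1, and orientation
  preserving; finally (\<phi> x, \<psi> x) \<in> F almost surely.\<close>

definition signed_area :: "complex \<Rightarrow> complex \<Rightarrow> complex \<Rightarrow> real" where
  "signed_area x y z = Im (cnj (y - x) * (z - x))"

lemma ccw_angle_eq_Arg2pi:
  assumes "u \<in> S1" "v \<in> S1"
  shows "ccw_angle u v = Arg2pi (v / u)"
  unfolding ccw_angle_def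
proof (rule the_equality)
  have u0: "u \<noteq> 0" using assms by auto
  have "v / u = cis (Arg2pi (v / u))"
    using Arg2pi_eq[of "v / u"] assms by (simp add: norm_divide cis_conv_exp)
  then have "v = u * cis (Arg2pi (v / u))" using u0 by (simp add: field_simps)
  then show "0 \<le> Arg2pi (v / u) \<and> Arg2pi (v / u) < 2 * pi \<and> v = u * cis (Arg2pi (v / u))"
    using Arg2pi by auto
next
  fix t assume t: "0 \<le> t \<and> t < 2 * pi \<and> v = u * cis t"
  then have "of_real 1 * exp (\<i> * of_real t) = v / u" using assms by (auto simp: cis_conv_exp)
  then show "t = Arg2pi (v / u)" using Arg2pi_unique[of 1 t "v / u"] t by simp
qed

lemma signed_area_rotate:
  assumes "x \<in> S1"
  shows "signed_area x y z = signed_area 1 (y / x) (z / x)"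
proof -
  have "cnj x * x = 1" using assms complex_norm_square[of x] by (simp add: mult.commute)
  moreover have "cnj (y - x) * (z - x) = cnj x * x * (cnj (y / x - 1) * (z / x - 1))"
    using assms by (auto simp: field_simps)
  ultimately show ?thesis unfolding signed_area_def by simp
qed

lemma signed_area_1_cis: "signed_area 1 (cis s) (cis t) = 4 * sin (s / 2) * sin (t / 2) * sin ((t - s) / 2)"
proof -
  define a b where "a = s / 2" and "b = t / 2"
  have "signed_area 1 (cis s) (cis t) = sin (2 * b - 2 * a) + sin (2 * a) - sin (2 * b)"
    unfolding signed_area_def a_def b_def by (simp add: sin_diff algebra_simps)
  also have "\<dots> = 4 * sin a * sin b * sin (b - a)"
    unfolding sin_diff cos_diff sin_double cos_double
    using sin_cos_squared_add[of a] sin_cos_squared_add[of b] by algebra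
  finally show ?thesis by (simp add: a_def b_def diff_divide_distrib)
qed

lemma orient_eq_sgn_signed_area:
  assumes "x \<in> S1" "y \<in> S1" "z \<in> S1"
  shows "of_int (orient x y z) = sgn (signed_area x y z)"
proof (cases "x = y \<or> y = z \<or> x = z")
  case True
  then have "signed_area x y z = 0" by (auto simp: signed_area_def algebra_simps)
  then show ?thesis using True by (simp add: orient_def)
next
  case False
  define s t where "s = Arg2pi (y / x)" and "t = Arg2pi (z / x)"
  have ys: "y / x = cis s" and zt: "z / x = cis t"
    using Arg2pi_eq[of "y / x"] Arg2pi_eq[of "z / x"] assms
    by (simp_all add: s_def t_def norm_divide cis_conv_exp)
  have range: "0 \<le> s" "s < 2 * pi" "0 \<le> t" "t < 2 * pi" using Arg2pi s_def t_def by auto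
  have "x \<noteq> 0" using assms by auto
  then have "s \<noteq> 0" "t \<noteq> 0" "s \<noteq> t" using False ys zt by (auto simp: field_simps)
  then have st_pos: "0 < s" "0 < t" using range by auto
  have "signed_area x y z = 4 * sin (s / 2) * sin (t / 2) * sin ((t - s) / 2)"
    using signed_area_rotate[OF assms(1)] ys zt signed_area_1_cis by simp
  moreover have "sin (s / 2) > 0" "sin (t / 2) > 0" using st_pos range by (auto intro!: sin_gt_zero)
  moreover have "sgn (sin ((t - s) / 2)) = (if s < t then 1 else -1)"
  proof (cases "s < t")
    case True
    then have "sin ((t - s) / 2) > 0" using range by (intro sin_gt_zero) auto
    then show ?thesis using True by simp
  next
    case False
    then have "sin ((s - t) / 2) > 0" using \<open>s \<noteq> t\<close> range by (auto intro!: sin_gt_zero)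
    moreover have "sin ((t - s) / 2) = - sin ((s - t) / 2)"
      by (metis minus_diff_eq minus_divide_left sin_minus)
    ultimately show ?thesis using False by simp
  qed
  moreover have "ccw_angle x y = s" "ccw_angle x z = t"
    using ccw_angle_eq_Arg2pi assms s_def t_def by auto
  ultimately show ?thesis using False by (simp add: orient_def pos_oriented_def sgn_mult)
qed

lemma orient_locally_constant:
  assumes "x \<in> S1" "y \<in> S1" "z \<in> S1" "x \<noteq> y" "y \<noteq> z" "x \<noteq> z"
  obtains A B C where "open A" "open B" "open C" "x \<in> A" "y \<in> B" "z \<in> C"
    "\<And>x' y' z'. x' \<in> A \<inter> S1 \<Longrightarrow> y' \<in> B \<inter> S1 \<Longrightarrow> z' \<in> C \<inter> S1 \<Longrightarrow> orient x' y' z' = orient x y z"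
proof -
  define r where "r = signed_area x y z"
  have "r \<noteq> 0"
    using orient_eq_sgn_signed_area[OF assms(1-3)] assms(4-6)
    by (auto simp: r_def orient_def split: if_splits)
  define W where "W = {p. 0 < signed_area (fst p) (fst (snd p)) (snd (snd p)) * r}"
  have "open W" unfolding W_def signed_area_def by (intro open_Collect_less continuous_intros)
  moreover have "(x, y, z) \<in> W" using \<open>r \<noteq> 0\<close> by (auto simp: W_def r_def zero_less_mult_iff linorder_neq_iff)
  ultimately obtain A BC where A: "open A" "open BC" "(x, y, z) \<in> A \<times> BC" "A \<times> BC \<subseteq> W"
    by (rule open_prod_elim)
  from A(3) have "(y, z) \<in> BC" by auto
  with A(2) obtain B C where BC: "open B" "open C" "(y, z) \<in> B \<times> C" "B \<times> C \<subseteq> BC"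
    by (rule open_prod_elim)
  show ?thesis
  proof (rule that[of A B C])
    fix x' y' z' assume pts: "x' \<in> A \<inter> S1" "y' \<in> B \<inter> S1" "z' \<in> C \<inter> S1"
    then have "(x', y', z') \<in> W" using A(4) BC(4) by blast
    then have "sgn (signed_area x' y' z') = sgn r" by (auto simp: W_def zero_less_mult_iff)
    then show "orient x' y' z' = orient x y z"
      using orient_eq_sgn_signed_area pts assms(1-3) r_def by (metis IntD2 of_int_eq_iff)
  qed (use A BC in auto)
qed

lemma orient_antipodal_separation:
  assumes "b \<in> S1" "b' \<in> S1" "b \<noteq> b'"
  obtains u where "u \<in> S1" "orient b u (- u) = 1" "orient b' u (- u) = -1"
proof -
  define r where "r = norm (b - b')"
  \<comment> \<open>the unit normal to b - b': the diameter through u separates b from b'\<close>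
  define u where "u = \<i> * (b - b') / of_real r"
  have "r > 0" using assms by (simp add: r_def)
  have u: "u \<in> S1" using \<open>r > 0\<close> by (simp add: u_def r_def norm_mult norm_divide)
  have area: "signed_area c u (- u) = 2 * Im (cnj c * u)" for c
    unfolding signed_area_def by (simp add: algebra_simps)
  define k where "k = Re b * Re b' + Im b * Im b'"
  have unit: "(Re b)\<^sup>2 + (Im b)\<^sup>2 = 1" "(Re b')\<^sup>2 + (Im b')\<^sup>2 = 1"
    using assms(1,2) by (simp_all add: cmod_def)
  have "r\<^sup>2 = (Re b - Re b')\<^sup>2 + (Im b - Im b')\<^sup>2" by (simp add: r_def cmod_def)
  moreover have "r\<^sup>2 > 0" using \<open>r > 0\<close> by simp
  ultimately have "k < 1" using unit by (simp add: k_def power2_eq_square algebra_simps)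
  have "Im (cnj b * u) = (1 - k) / r" "Im (cnj b' * u) = (k - 1) / r"
    using unit by (simp_all add: u_def k_def power2_eq_square algebra_simps diff_divide_distrib add_divide_distrib)
  then have "sgn (signed_area b u (- u)) = 1" "sgn (signed_area b' u (- u)) = -1"
    using \<open>k < 1\<close> \<open>r > 0\<close> by (simp_all add: area)
  then have "of_int (orient b u (- u)) = (1::real)" "of_int (orient b' u (- u)) = (-1::real)"
    using orient_eq_sgn_signed_area u assms by auto
  then show ?thesis using that u by simp
qed

lemma ess_image_iff:
  assumes "f \<in> borel_measurable M"
  shows "p \<in> ess_image M f \<longleftrightarrow> (\<forall>U. open U \<longrightarrow> p \<in> U \<longrightarrow> 0 < emeasure M (f -` U \<inter> space M))"
proof -
  have "emeasure (distr M borel f) U = emeasure M (f -` U \<inter> space M)" if "open U" for U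
    using that by (intro emeasure_distr[OF assms] borel_open)
  then show ?thesis unfolding ess_image_def measure_support_def by simp
qed

lemma closed_measure_support: "closed (measure_support \<mu>)"
proof -
  have "- measure_support \<mu> = \<Union>{U. open U \<and> emeasure \<mu> U = 0}"
    unfolding measure_support_def by (auto simp: not_less)
  then show ?thesis by (simp add: closed_def open_Union)
qed

lemma emeasure_open_disjoint_measure_support:
  fixes \<mu> :: "'a::second_countable_topology measure"
  assumes "sets \<mu> = sets borel" "open U" "U \<inter> measure_support \<mu> = {}"
  shows "emeasure \<mu> U = 0"
proof -
  define \<F> where "\<F> = {W \<inter> U | W. open W \<and> emeasure \<mu> W = 0}"
  have "\<Union>\<F> = U"
  proof
    show "U \<subseteq> \<Union>\<F>"
    proof
      fix p assume "p \<in> U"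
      then have "p \<notin> measure_support \<mu>" using assms(3) by auto
      then obtain W where "open W" "p \<in> W" "emeasure \<mu> W = 0"
        by (auto simp: measure_support_def not_less)
      then show "p \<in> \<Union>\<F>" using \<open>p \<in> U\<close> by (auto simp: \<F>_def)
    qed
  qed (auto simp: \<F>_def)
  obtain \<F>' where \<F>': "\<F>' \<subseteq> \<F>" "countable \<F>'" "\<Union>\<F>' = \<Union>\<F>"
    using Lindelof[of \<F>] assms(2) by (auto simp: \<F>_def)
  have null: "S \<in> null_sets \<mu>" if "S \<in> \<F>" for S
  proof -
    obtain W where W: "S = W \<inter> U" "open W" "emeasure \<mu> W = 0" using \<open>S \<in> \<F>\<close> by (auto simp: \<F>_def)
    then have "W \<in> null_sets \<mu>" using assms(1) by (simp add: null_sets_def)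
    then show ?thesis by (rule null_sets_subset) (use W assms in auto)
  qed
  have "(\<Union>S\<in>\<F>'. S) \<in> null_sets \<mu>" using \<F>' null by (intro null_sets_UN') auto
  then show ?thesis using \<F>' \<open>\<Union>\<F> = U\<close> by (simp add: null_sets_def)
qed

lemma ess_image_meets_open:
  fixes f :: "'b \<Rightarrow> 'a::second_countable_topology"
  assumes "f \<in> borel_measurable M" "open U" "0 < emeasure M (f -` U \<inter> space M)"
  shows "U \<inter> ess_image M f \<noteq> {}"
  using emeasure_open_disjoint_measure_support[of "distr M borel f" U] assms
  by (auto simp: ess_image_def emeasure_distr)

lemma AE_in_ess_image:
  fixes f :: "'b \<Rightarrow> 'a::second_countable_topology"
  assumes "f \<in> borel_measurable M"
  shows "AE x in M. f x \<in> ess_image M f"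
proof (rule AE_distrD[OF assms])
  have "open (- ess_image M f)"
    using closed_measure_support[of "distr M borel f"] unfolding ess_image_def by (rule open_Compl)
  then have "- ess_image M f \<in> null_sets (distr M borel f)"
    using emeasure_open_disjoint_measure_support[of "distr M borel f"]
    by (auto simp: null_sets_def ess_image_def)
  then show "AE p in distr M borel f. p \<in> ess_image M f" by (rule AE_I') auto
qed

lemma ess_image_subset_closed:
  assumes "f \<in> borel_measurable M" "closed C" "\<forall>x\<in>space M. f x \<in> C"
  shows "ess_image M f \<subseteq> C"
proof
  fix p assume "p \<in> ess_image M f"
  moreover have "f -` (- C) \<inter> space M = {}" using assms(3) by auto
  ultimately show "p \<in> C" using assms(1,2) by (auto simp: ess_image_iff open_Compl)
qed

lemma ess_image_Pair_swap_iff: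
  fixes f :: "'b \<Rightarrow> 'c::second_countable_topology" and g :: "'b \<Rightarrow> 'd::second_countable_topology"
  assumes "f \<in> borel_measurable M" "g \<in> borel_measurable M"
  shows "(a, b) \<in> ess_image M (\<lambda>x. (g x, f x)) \<longleftrightarrow> (b, a) \<in> ess_image M (\<lambda>x. (f x, g x))"
  unfolding ess_image_iff[OF borel_measurable_Pair[OF assms(1,2)]] ess_image_iff[OF borel_measurable_Pair[OF assms(2,1)]]
proof (intro iffI allI impI)
  fix V :: "('c \<times> 'd) set" assume "\<forall>U. open U \<longrightarrow> (a, b) \<in> U \<longrightarrow> 0 < emeasure M ((\<lambda>x. (g x, f x)) -` U \<inter> space M)"
    and "open V" "(b, a) \<in> V"
  moreover have "open (prod.swap -` V)" using \<open>open V\<close> by (simp add: open_vimage continuous_on_swap)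
  ultimately show "0 < emeasure M ((\<lambda>x. (f x, g x)) -` V \<inter> space M)"
    by (auto simp: vimage_def elim!: allE[of _ "prod.swap -` V"])
next
  fix U :: "('d \<times> 'c) set" assume "\<forall>V. open V \<longrightarrow> (b, a) \<in> V \<longrightarrow> 0 < emeasure M ((\<lambda>x. (f x, g x)) -` V \<inter> space M)"
    and "open U" "(a, b) \<in> U"
  moreover have "open (prod.swap -` U)" using \<open>open U\<close> by (simp add: open_vimage continuous_on_swap)
  ultimately show "0 < emeasure M ((\<lambda>x. (g x, f x)) -` U \<inter> space M)"
    by (auto simp: vimage_def elim!: allE[of _ "prod.swap -` U"])
qed

lemma ess_image_subset_fst_ess_image_Pair:
  fixes f :: "'b \<Rightarrow> 'a::{second_countable_topology, t2_space}"
    and g :: "'b \<Rightarrow> 'c::second_countable_topology"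
  assumes "f \<in> borel_measurable M" "g \<in> borel_measurable M"
    and "compact (ess_image M (\<lambda>x. (f x, g x)))"
  shows "ess_image M f \<subseteq> fst ` ess_image M (\<lambda>x. (f x, g x))"
proof
  fix p assume p: "p \<in> ess_image M f"
  show "p \<in> fst ` ess_image M (\<lambda>x. (f x, g x))"
  proof (rule ccontr)
    define U where "U = - fst ` ess_image M (\<lambda>x. (f x, g x))"
    assume "p \<notin> fst ` ess_image M (\<lambda>x. (f x, g x))"
    then have "p \<in> U" by (simp add: U_def)
    moreover have "open U"
      using assms(3) by (auto simp: U_def intro!: compact_imp_closed compact_continuous_image continuous_intros)
    ultimately have "0 < emeasure M (f -` U \<inter> space M)" using p assms(1) by (auto simp: ess_image_iff)
    moreover have "(\<lambda>x. (f x, g x)) -` (U \<times> UNIV) = f -` U" by auto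
    ultimately have "(U \<times> UNIV) \<inter> ess_image M (\<lambda>x. (f x, g x)) \<noteq> {}"
      using \<open>open U\<close> assms(1,2) by (intro ess_image_meets_open) (auto simp: open_Times)
    then show False by (force simp: U_def)
  qed
qed

lemma ess_image_Pair_avoid_finite:
  fixes f :: "'b \<Rightarrow> 'a::{second_countable_topology, t1_space}"
    and g :: "'b \<Rightarrow> 'c::second_countable_topology"
  assumes "f \<in> borel_measurable M" "g \<in> borel_measurable M"
    and "\<forall>p. emeasure (distr M borel f) {p} = 0"
    and "finite K" "open V" "V \<inter> ess_image M g \<noteq> {}"
  obtains x c where "(x, c) \<in> ess_image M (\<lambda>x. (f x, g x))" "x \<notin> K" "c \<in> V"
proof -
  have "open ((- K) \<times> V)" using assms(4,5) by (simp add: open_Times open_Compl finite_imp_closed)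
  have "emeasure (distr M borel f) K = 0"
    using assms(3,4) by (subst emeasure_eq_sum_singleton) auto
  then have null: "f -` K \<inter> space M \<in> null_sets M"
    using assms(1,4) by (auto simp: emeasure_distr finite_imp_closed null_sets_def)
  have "0 < emeasure M (g -` V \<inter> space M)"
    using assms(5,6) ess_image_iff[OF assms(2)] by blast
  also have "\<dots> = emeasure M ((g -` V \<inter> space M) - (f -` K \<inter> space M))"
    using null assms(2,5) by (simp add: emeasure_Diff_null_set)
  also have "\<dots> \<le> emeasure M ((\<lambda>x. (f x, g x)) -` ((- K) \<times> V) \<inter> space M)"
    using assms(1,2,4,5)
    by (intro emeasure_mono) (auto intro!: measurable_sets[of _ M borel] open_Times simp: finite_imp_closed)
  finally have "((- K) \<times> V) \<inter> ess_image M (\<lambda>x. (f x, g x)) \<noteq> {}"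
    using assms(1,2) \<open>open ((- K) \<times> V)\<close> by (intro ess_image_meets_open) auto
  then show ?thesis using that by auto
qed

lemma ess_image_triple_sample:
  assumes "sigma_finite_measure M" "f \<in> borel_measurable M"
    and "AE t in M \<Otimes>\<^sub>M (M \<Otimes>\<^sub>M M). P (f (fst t)) (f (fst (snd t))) (f (snd (snd t)))"
    and "p \<in> ess_image M f" "q \<in> ess_image M f" "r \<in> ess_image M f"
    and "open A" "open B" "open C" "p \<in> A" "q \<in> B" "r \<in> C"
  obtains x y z where "x \<in> space M" "y \<in> space M" "z \<in> space M"
    "f x \<in> A" "f y \<in> B" "f z \<in> C" "P (f x) (f y) (f z)"
proof (rule ccontr)
  interpret M: sigma_finite_measure M by fact
  interpret MM: sigma_finite_measure "M \<Otimes>\<^sub>M M" by (rule sigma_finite_pair_measure[OF assms(1,1)])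
  define Q where "Q D = f -` D \<inter> space M" for D
  define T where "T = Q A \<times> Q B \<times> Q C"
  have Q: "Q D \<in> sets M" if "open D" for D
    using assms(2) that by (auto simp: Q_def intro!: measurable_sets[of _ M borel])
  assume "\<not> thesis"
  have "AE t in M \<Otimes>\<^sub>M (M \<Otimes>\<^sub>M M). t \<notin> T"
    using assms(3) by eventually_elim (use that \<open>\<not> thesis\<close> in \<open>auto simp: T_def Q_def\<close>)
  then have "emeasure (M \<Otimes>\<^sub>M (M \<Otimes>\<^sub>M M)) T = 0"
    using Q assms(7-9) by (subst (asm) AE_iff_null_sets[symmetric]) (auto simp: T_def)
  moreover have "emeasure (M \<Otimes>\<^sub>M (M \<Otimes>\<^sub>M M)) T = emeasure M (Q A) * (emeasure M (Q B) * emeasure M (Q C))"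
    using Q assms(7-9)
    by (simp add: T_def MM.emeasure_pair_measure_Times M.emeasure_pair_measure_Times)
  moreover have "emeasure M (Q D) \<noteq> 0" if "s \<in> ess_image M f" "open D" "s \<in> D" for s D
    using that assms(2) by (auto simp: Q_def ess_image_iff)
  ultimately show False using assms(4-12) by simp
qed

lemma homeomorphism_of_closed_bijective_graph:
  fixes S :: "'a::euclidean_space set"
  assumes "compact S" "closed G" "G \<subseteq> S \<times> S"
    and "\<And>u. u \<in> S \<Longrightarrow> \<exists>!v. (u, v) \<in> G" "\<And>v. v \<in> S \<Longrightarrow> \<exists>!u. (u, v) \<in> G"
  obtains h where "\<exists>g. homeomorphism S S h g" "G = {(u, h u) | u. u \<in> S}"
proof -
  define h where "h u = (THE v. (u, v) \<in> G)" for u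
  have h_graph: "(u, v) \<in> G \<longleftrightarrow> u \<in> S \<and> v = h u" for u v
    using assms(3,4) theI'[OF assms(4)] by (auto simp: h_def the1_equality)
  have graph: "G = {(u, h u) | u. u \<in> S}" using h_graph by auto
  have "h ` S = S"
  proof
    show "h ` S \<subseteq> S" using assms(3) h_graph by blast
    show "S \<subseteq> h ` S"
    proof
      fix v assume "v \<in> S"
      then obtain u where "(u, v) \<in> G" using assms(5) by blast
      then show "v \<in> h ` S" using h_graph by auto
    qed
  qed
  moreover have "inj_on h S"
  proof (rule inj_onI)
    fix x y assume "x \<in> S" "y \<in> S" "h x = h y"
    then have "(x, h x) \<in> G" "(y, h x) \<in> G" "h x \<in> S" using h_graph \<open>h ` S = S\<close> by auto
    then show "x = y" using assms(5) by blast
  qed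
  moreover have "continuous_on S h"
    using assms(1,2) \<open>h ` S = S\<close> graph
    by (intro continuous_from_closed_graph[of S]) (auto simp: image_def setcompr_eq_image)
  ultimately have "\<exists>g. homeomorphism S S h g" using assms(1) by (intro homeomorphism_compact)
  then show ?thesis using that graph by blast
qed

locale orientation_compatible_circle_maps =
  fixes M :: "'b measure" and \<phi> \<psi> :: "'b \<Rightarrow> complex"
  assumes prob_space: "prob_space M"
    and measurable: "\<phi> \<in> borel_measurable M" "\<psi> \<in> borel_measurable M"
    and in_S1: "\<forall>x\<in>space M. \<phi> x \<in> S1" "\<forall>x\<in>space M. \<psi> x \<in> S1"
    and atomless: "\<forall>p. emeasure (distr M borel \<phi>) {p} = 0" "\<forall>p. emeasure (distr M borel \<psi>) {p} = 0"
    and ess_image_eq_S1: "ess_image M \<phi> = S1" "ess_image M \<psi> = S1"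
    and AE_orient_eq: "AE t in M \<Otimes>\<^sub>M (M \<Otimes>\<^sub>M M).
           orient (\<phi> (fst t)) (\<phi> (fst (snd t))) (\<phi> (snd (snd t)))
         = orient (\<psi> (fst t)) (\<psi> (fst (snd t))) (\<psi> (snd (snd t)))"
begin

abbreviation joint_ess_image :: "(complex \<times> complex) set" where
  "joint_ess_image \<equiv> ess_image M (\<lambda>x. (\<phi> x, \<psi> x))"

lemma joint_ess_image_subset: "joint_ess_image \<subseteq> S1 \<times> S1"
  using measurable in_S1 by (intro ess_image_subset_closed) (auto intro: closed_Times)

lemma compact_joint_ess_image: "compact joint_ess_image"
proof -
  have "compact (S1 \<times> S1 \<inter> joint_ess_image)"
    using closed_measure_support unfolding ess_image_def
    by (intro compact_Int_closed compact_Times compact_sphere)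
  then show ?thesis using joint_ess_image_subset by (simp add: Int_absorb1)
qed

lemma orient_joint_ess_image:
  assumes "(a1, b1) \<in> joint_ess_image" "(a2, b2) \<in> joint_ess_image" "(a3, b3) \<in> joint_ess_image"
    and "a1 \<noteq> a2" "a2 \<noteq> a3" "a1 \<noteq> a3" "b1 \<noteq> b2" "b2 \<noteq> b3" "b1 \<noteq> b3"
  shows "orient a1 a2 a3 = orient b1 b2 b3"
proof -
  have S: "a1 \<in> S1" "a2 \<in> S1" "a3 \<in> S1" "b1 \<in> S1" "b2 \<in> S1" "b3 \<in> S1"
    using assms(1-3) joint_ess_image_subset by auto
  obtain A1 A2 A3 where A: "open A1" "open A2" "open A3" "a1 \<in> A1" "a2 \<in> A2" "a3 \<in> A3"
    "\<And>x y z. x \<in> A1 \<inter> S1 \<Longrightarrow> y \<in> A2 \<inter> S1 \<Longrightarrow> z \<in> A3 \<inter> S1 \<Longrightarrow> orient x y z = orient a1 a2 a3"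
    using orient_locally_constant[OF S(1-3) assms(4-6)] by blast
  obtain B1 B2 B3 where B: "open B1" "open B2" "open B3" "b1 \<in> B1" "b2 \<in> B2" "b3 \<in> B3"
    "\<And>x y z. x \<in> B1 \<inter> S1 \<Longrightarrow> y \<in> B2 \<inter> S1 \<Longrightarrow> z \<in> B3 \<inter> S1 \<Longrightarrow> orient x y z = orient b1 b2 b3"
    using orient_locally_constant[OF S(4-6) assms(7-9)] by blast
  let ?P = "\<lambda>p q r. orient (fst p) (fst q) (fst r) = orient (snd p) (snd q) (snd r)"
  obtain x1 x2 x3 where x: "x1 \<in> space M" "x2 \<in> space M" "x3 \<in> space M"
    "(\<phi> x1, \<psi> x1) \<in> A1 \<times> B1" "(\<phi> x2, \<psi> x2) \<in> A2 \<times> B2" "(\<phi> x3, \<psi> x3) \<in> A3 \<times> B3"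
    "?P (\<phi> x1, \<psi> x1) (\<phi> x2, \<psi> x2) (\<phi> x3, \<psi> x3)"
  proof (rule ess_image_triple_sample[where P = ?P and p = "(a1, b1)" and q = "(a2, b2)" and r = "(a3, b3)"
        and A = "A1 \<times> B1" and B = "A2 \<times> B2" and C = "A3 \<times> B3"])
    show "sigma_finite_measure M" using prob_space by (rule prob_space_imp_sigma_finite)
    show "AE t in M \<Otimes>\<^sub>M (M \<Otimes>\<^sub>M M). ?P ((\<lambda>x. (\<phi> x, \<psi> x)) (fst t))
      ((\<lambda>x. (\<phi> x, \<psi> x)) (fst (snd t))) ((\<lambda>x. (\<phi> x, \<psi> x)) (snd (snd t)))"
      using AE_orient_eq by simp
  qed (use measurable assms(1-3) A(1-6) B(1-6) in \<open>auto intro: open_Times\<close>)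
  then show ?thesis using A(7) B(7) in_S1 by auto
qed

lemma joint_ess_image_left_total: "u \<in> S1 \<Longrightarrow> \<exists>v. (u, v) \<in> joint_ess_image"
  using ess_image_subset_fst_ess_image_Pair[OF measurable compact_joint_ess_image]
    ess_image_eq_S1(1) by force

lemma joint_ess_image_functional:
  assumes "(a, b) \<in> joint_ess_image" "(a, b') \<in> joint_ess_image"
  shows "b = b'"
proof (rule ccontr)
  assume "b \<noteq> b'"
  have S: "a \<in> S1" "b \<in> S1" "b' \<in> S1" using assms joint_ess_image_subset by auto
  obtain u where u: "u \<in> S1" "orient b u (- u) = 1" "orient b' u (- u) = -1"
    using orient_antipodal_separation S(2,3) \<open>b \<noteq> b'\<close> by metis
  have "- u \<in> S1" using u(1) by simp
  have distinct: "b \<noteq> u" "u \<noteq> - u" "b \<noteq> - u" "b' \<noteq> u" "b' \<noteq> - u"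
    using u by (auto simp: orient_def)
  obtain A U V where nbhds: "open A" "open U" "open V" "b \<in> A" "u \<in> U" "- u \<in> V"
    and orient_U: "\<And>x c d. x \<in> A \<inter> S1 \<Longrightarrow> c \<in> U \<inter> S1 \<Longrightarrow> d \<in> V \<inter> S1 \<Longrightarrow> orient x c d = orient b u (- u)"
    using orient_locally_constant[OF S(2) u(1) \<open>- u \<in> S1\<close> distinct(1-3)] by blast
  obtain A' U' V' where nbhds': "open A'" "open U'" "open V'" "b' \<in> A'" "u \<in> U'" "- u \<in> V'"
    and orient_U': "\<And>x c d. x \<in> A' \<inter> S1 \<Longrightarrow> c \<in> U' \<inter> S1 \<Longrightarrow> d \<in> V' \<inter> S1 \<Longrightarrow> orient x c d = orient b' u (- u)"
    using orient_locally_constant[OF S(3) u(1) \<open>- u \<in> S1\<close> distinct(4) distinct(2) distinct(5)] by blast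
  obtain x c where xc: "(x, c) \<in> joint_ess_image" "x \<notin> {a}" "c \<in> U \<inter> U'"
    using ess_image_Pair_avoid_finite[OF measurable atomless(1), of "{a}" "U \<inter> U'"]
      nbhds nbhds' ess_image_eq_S1(2) u(1) by blast
  obtain y d where yd: "(y, d) \<in> joint_ess_image" "y \<notin> {a, x}" "d \<in> V \<inter> V'"
    using ess_image_Pair_avoid_finite[OF measurable atomless(1), of "{a, x}" "V \<inter> V'"]
      nbhds nbhds' ess_image_eq_S1(2) \<open>- u \<in> S1\<close> by blast
  have "c \<in> S1" "d \<in> S1" using xc yd joint_ess_image_subset by auto
  then have bcd: "orient b c d = 1" "orient b' c d = -1"
    using orient_U orient_U' nbhds nbhds' xc yd S u by auto
  then have "b \<noteq> c" "c \<noteq> d" "b \<noteq> d" "b' \<noteq> c" "b' \<noteq> d" by (auto simp: orient_def)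
  moreover have "a \<noteq> x" "x \<noteq> y" "a \<noteq> y" using xc(2) yd(2) by auto
  ultimately have "orient a x y = orient b c d" "orient a x y = orient b' c d"
    using orient_joint_ess_image[OF assms(1) xc(1) yd(1)] orient_joint_ess_image[OF assms(2) xc(1) yd(1)]
    by auto
  with bcd show False by simp
qed

lemma ex1_joint_ess_image_snd: "u \<in> S1 \<Longrightarrow> \<exists>!v. (u, v) \<in> joint_ess_image"
  using joint_ess_image_left_total joint_ess_image_functional by blast

lemma orientation_compatible_swap: "orientation_compatible_circle_maps M \<psi> \<phi>"
proof -
  have "AE t in M \<Otimes>\<^sub>M (M \<Otimes>\<^sub>M M).
           orient (\<psi> (fst t)) (\<psi> (fst (snd t))) (\<psi> (snd (snd t)))
         = orient (\<phi> (fst t)) (\<phi> (fst (snd t))) (\<phi> (snd (snd t)))"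
    using AE_orient_eq by (rule eventually_mono) simp
  then show ?thesis
    using orientation_compatible_circle_maps_axioms unfolding orientation_compatible_circle_maps_def by blast
qed

lemma ex1_joint_ess_image_fst: "v \<in> S1 \<Longrightarrow> \<exists>!u. (u, v) \<in> joint_ess_image"
proof -
  interpret swapped: orientation_compatible_circle_maps M \<psi> \<phi> by (rule orientation_compatible_swap)
  assume "v \<in> S1"
  then have "\<exists>!u. (v, u) \<in> ess_image M (\<lambda>x. (\<psi> x, \<phi> x))"
    by (rule swapped.ex1_joint_ess_image_snd)
  then show ?thesis using ess_image_Pair_swap_iff[OF measurable] by simp
qed

lemma orient_preserved_by_graph:
  assumes "joint_ess_image = {(u, h u) | u. u \<in> S1}" "inj_on h S1"
    and "x \<in> S1" "y \<in> S1" "z \<in> S1"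
  shows "orient (h x) (h y) (h z) = orient x y z"
proof (cases "x = y \<or> y = z \<or> x = z")
  case True
  then show ?thesis by (auto simp: orient_def)
next
  case False
  then have "h x \<noteq> h y" "h y \<noteq> h z" "h x \<noteq> h z" using assms(2-5) by (auto dest: inj_onD)
  then show ?thesis using orient_joint_ess_image[of x "h x" y "h y" z "h z"] False assms(1,3-5) by auto
qed

end

theorem lemma4p13:
  fixes M :: "'b measure" and \<phi> \<psi> :: "'b \<Rightarrow> complex"
  assumes "prob_space M"
    and "\<phi> \<in> borel_measurable M" and "\<psi> \<in> borel_measurable M"
    and "\<forall>x\<in>space M. \<phi> x \<in> S1" and "\<forall>x\<in>space M. \<psi> x \<in> S1"
    and "\<forall>p. emeasure (distr M borel \<phi>) {p} = 0"
    and "\<forall>p. emeasure (distr M borel \<psi>) {p} = 0"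
    and "ess_image M \<phi> = S1" and "ess_image M \<psi> = S1"
    and "AE t in M \<Otimes>\<^sub>M (M \<Otimes>\<^sub>M M).
           orient (\<phi> (fst t)) (\<phi> (fst (snd t))) (\<phi> (snd (snd t)))
         = orient (\<psi> (fst t)) (\<psi> (fst (snd t))) (\<psi> (snd (snd t)))"
  shows "\<exists>h. orient_pres_homeo h
           \<and> ess_image M (\<lambda>x. (\<phi> x, \<psi> x)) = {(u, h u) | u. u \<in> S1}
           \<and> (AE x in M. h (\<phi> x) = \<psi> x)"
proof -
  interpret orientation_compatible_circle_maps M \<phi> \<psi>
    by (rule orientation_compatible_circle_maps.intro) (fact assms)+
  obtain h where h: "\<exists>g. homeomorphism S1 S1 h g" "joint_ess_image = {(u, h u) | u. u \<in> S1}"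
    by (rule homeomorphism_of_closed_bijective_graph[OF compact_sphere
          compact_imp_closed[OF compact_joint_ess_image] joint_ess_image_subset
          ex1_joint_ess_image_snd ex1_joint_ess_image_fst])
  then have "inj_on h S1" by (auto intro: inj_on_inverseI homeomorphism_apply1)
  then have "orient_pres_homeo h"
    using h orient_preserved_by_graph unfolding orient_pres_homeo_def by blast
  moreover have "AE x in M. h (\<phi> x) = \<psi> x"
    using AE_in_ess_image[OF borel_measurable_Pair[OF measurable]] by eventually_elim (auto simp: h(2))
  ultimately show ?thesis using h(2) by blast
qed

end
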